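(* Let $C$ be a linear $[n,k,d]_q$ code with covering radius $\rho$, and let $C'=\{(a,x_1,\dots,x_n): a\in\mathbb{F}_q,\ (x_1,\dots,x_n)\in C\}\subseteq\mathbb{F}_q^{n+1}$ be its $q$-repeated code. Then $C'$ has covering radius $\rho'=\rho$ and minimum distance $d'=1$. Moreover, $C'$ is completely regular if and only if $C$ is completely regular.
   Context: $\mathbb{F}_q$ is the finite field with $q$ elements. Hamming weight $\mathrm{wt}$ and distance $d({\bf x},{\bf y})=\mathrm{wt}({\bf x}-{\bf y})$; $d({\bf v},C)=\min_{{\bf x}\in C}d({\bf v},{\bf x})$; covering radius $\rho=\max_{{\bf v}}d({\bf v},C)$. A code $C$ is completely regular if for every vector ${\bf x}$, with $t=d({\bf x},C)$, the number of codewords at distance $i$ from ${\bf x}$ depends only on $t$ and $i$. *)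

theory Defs
  imports Main
begin

definition vecs :: "nat \<Rightarrow> 'a list set" where
  "vecs n = {x. length x = n}"

definition hwt :: "'a::zero list \<Rightarrow> nat" where
  "hwt x = length (filter (\<lambda>c. c \<noteq> 0) x)"

definition hdist :: "'a::ab_group_add list \<Rightarrow> 'a list \<Rightarrow> nat" where
  "hdist x y = hwt (map2 (-) x y)"

definition dist_code :: "'a::ab_group_add list \<Rightarrow> 'a list set \<Rightarrow> nat" where
  "dist_code v C = Min ((\<lambda>x. hdist v x) ` C)"

definition covering_radius :: "nat \<Rightarrow> 'a::ab_group_add list set \<Rightarrow> nat" where
  "covering_radius n C = Max ((\<lambda>v. dist_code v C) ` vecs n)"

definition min_distance :: "'a::ab_group_add list set \<Rightarrow> nat" where
  "min_distance C = Min {hdist x y | x y. x \<in> C \<and> y \<in> C \<and> x \<noteq> y}"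

definition linear_code :: "nat \<Rightarrow> 'a::field list set \<Rightarrow> bool" where
  "linear_code n C \<longleftrightarrow> C \<subseteq> vecs n \<and> replicate n 0 \<in> C \<and>
     (\<forall>x\<in>C. \<forall>y\<in>C. map2 (+) x y \<in> C) \<and>
     (\<forall>a. \<forall>x\<in>C. map (\<lambda>c. a * c) x \<in> C)"

definition completely_regular :: "nat \<Rightarrow> 'a::ab_group_add list set \<Rightarrow> bool" where
  "completely_regular n C \<longleftrightarrow>
     (\<forall>x\<in>vecs n. \<forall>y\<in>vecs n. dist_code x C = dist_code y C \<longrightarrow>
        (\<forall>i. card {c\<in>C. hdist x c = i} = card {c\<in>C. hdist y c = i}))"

definition repeated_code :: "'a list set \<Rightarrow> 'a list set" where
  "repeated_code C = {a # x | a x. x \<in> C}"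

end

theory Submission
  imports Defs
begin

text \<open>Prepending a free coordinate changes no distance to the code: the new coordinate of the
  nearest codeword can always be matched. Hence distances to the code, and so the covering radius,
  are unchanged. The number of codewords of the repeated code at distance i from (b, v) is
  N_i(v) + (q - 1) N_(i-1)(v), where N_i(v) counts codewords of C at distance i from v; this
  triangular relation can be inverted, so two vectors have the same distance distribution with
  respect to one code iff they do with respect to the other, which transfers complete regularity
  in both directions. Finally (0, x) and (1, x) are codewords at distance 1 for any x in C.\<close>

lemma hdist_Cons:
  "hdist (b # v) (a # x) = (if b = a then 0 else 1) + hdist v (x :: 'a::ab_group_add list)"
  by (simp add: hdist_def hwt_def)

lemma hdist_eq_0_imp_eq:
  fixes x y :: "'a::ab_group_add list"
  assumes "length x = length y" and "hdist x y = 0"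
  shows "x = y"
  using assms
proof (induction x arbitrary: y)
  case (Cons a x)
  then obtain b z where "y = b # z" by (cases y) auto
  with Cons show ?case by (auto simp: hdist_Cons split: if_splits)
qed simp

lemma hdist_self [simp]: "hdist x (x :: 'a::ab_group_add list) = 0"
  by (induction x) (simp_all add: hdist_Cons, simp add: hdist_def hwt_def)

lemma finite_vecs: "finite (vecs n :: 'a::finite list set)"
  using finite_lists_length_eq[of "UNIV :: 'a set" n] by (simp add: vecs_def)

lemma vecs_Suc: "vecs (Suc n) = {b # v | b v. v \<in> vecs n}"
  by (auto simp: vecs_def length_Suc_conv)

lemma repeated_code_eq_image: "repeated_code C = (\<lambda>(a, x). a # x) ` (UNIV \<times> C)"
  by (auto simp: repeated_code_def)

lemma finite_repeated_code: "finite (C :: 'a::finite list set) \<Longrightarrow> finite (repeated_code C)"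
  by (simp add: repeated_code_eq_image)

lemma dist_code_repeated_code:
  fixes C :: "'a::{finite,ab_group_add} list set"
  assumes fin: "finite C" and ne: "C \<noteq> {}"
  shows "dist_code (b # v) (repeated_code C) = dist_code v C"
proof (rule antisym)
  have fin': "finite (repeated_code C)" using fin by (rule finite_repeated_code)
  have "dist_code v C \<in> (\<lambda>x. hdist v x) ` C"
    unfolding dist_code_def using fin ne by (intro Min_in) auto
  then obtain x where x: "x \<in> C" "dist_code v C = hdist v x" by auto
  have "b # x \<in> repeated_code C" using x by (auto simp: repeated_code_def)
  then have "dist_code (b # v) (repeated_code C) \<le> hdist (b # v) (b # x)"
    unfolding dist_code_def using fin' by (intro Min_le) auto
  then show "dist_code (b # v) (repeated_code C) \<le> dist_code v C"
    using x by (simp add: hdist_Cons)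
next
  have "dist_code v C \<le> hdist (b # v) (a # x)" if "x \<in> C" for a x
  proof -
    have "dist_code v C \<le> hdist v x" unfolding dist_code_def using fin that by (intro Min_le) auto
    then show ?thesis by (simp add: hdist_Cons)
  qed
  then show "dist_code v C \<le> dist_code (b # v) (repeated_code C)"
    unfolding dist_code_def [of "b # v"] using finite_repeated_code[OF fin] ne
    by (intro Min.boundedI) (auto simp: repeated_code_def)
qed

lemma covering_radius_repeated_code:
  fixes C :: "'a::{finite,ab_group_add} list set"
  assumes "finite C" and "C \<noteq> {}"
  shows "covering_radius (Suc n) (repeated_code C) = covering_radius n C"
proof -
  have "(\<lambda>v. dist_code v (repeated_code C)) ` vecs (Suc n) = (\<lambda>v. dist_code v C) ` vecs n"
    by (force simp: vecs_Suc dist_code_repeated_code[OF assms] image_iff)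
  then show ?thesis by (simp add: covering_radius_def)
qed

lemma min_distance_repeated_code:
  fixes C :: "'a::{finite,ring_1} list set"
  assumes sub: "C \<subseteq> vecs n" and fin: "finite C" and x: "x \<in> C"
  shows "min_distance (repeated_code C) = 1"
proof -
  let ?C' = "repeated_code C"
  let ?S = "{hdist x y | x y. x \<in> ?C' \<and> y \<in> ?C' \<and> x \<noteq> y}"
  have "?S \<subseteq> (\<lambda>(x, y). hdist x y) ` (?C' \<times> ?C')" by auto
  then have "finite ?S" using finite_repeated_code[OF fin] by (meson finite_SigmaI finite_imageI finite_subset)
  moreover have "1 \<in> ?S"
  proof -
    have "0 # x \<in> ?C'" "1 # x \<in> ?C'" using x by (auto simp: repeated_code_def)
    moreover have "hdist (0 # x) (1 # x) = 1" by (simp add: hdist_Cons hdist_self)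
    ultimately show ?thesis by force
  qed
  moreover have "1 \<le> m" if "m \<in> ?S" for m
  proof -
    obtain y z where yz: "y \<in> ?C'" "z \<in> ?C'" "y \<noteq> z" "m = hdist y z" using \<open>m \<in> ?S\<close> by blast
    have "length y = length z" using yz(1,2) sub by (auto simp: repeated_code_def vecs_def subset_iff)
    with yz show ?thesis using hdist_eq_0_imp_eq by (metis less_one not_less)
  qed
  ultimately show ?thesis unfolding min_distance_def by (meson Min_eqI)
qed

lemma card_sphere_repeated_code:
  fixes C :: "'a::{finite,ab_group_add} list set"
  assumes fin: "finite C"
  shows "card {c \<in> repeated_code C. hdist (b # v) c = i} =
    card {x \<in> C. hdist v x = i} + (card (UNIV :: 'a set) - 1) * card {x \<in> C. Suc (hdist v x) = i}"
proof -
  let ?A = "{x \<in> C. hdist v x = i}" and ?B = "{x \<in> C. Suc (hdist v x) = i}"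
  have split: "{c \<in> repeated_code C. hdist (b # v) c = i} =
      Cons b ` ?A \<union> (\<lambda>(a, x). a # x) ` ((- {b}) \<times> ?B)"
    by (auto simp: repeated_code_def hdist_Cons split: if_splits)
  have "inj_on (\<lambda>(a, x). a # x) ((- {b}) \<times> ?B)" by (auto simp: inj_on_def)
  then have "card ((\<lambda>(a, x). a # x) ` ((- {b}) \<times> ?B)) = (card (UNIV :: 'a set) - 1) * card ?B"
    by (simp add: card_image card_cartesian_product Compl_eq_Diff_UNIV card_Diff_singleton)
  then show ?thesis unfolding split
    using fin by (subst card_Un_disjoint) (auto simp: card_image)
qed

lemma sphere_counts_repeated_code_eq_iff:
  fixes C :: "'a::{finite,ab_group_add} list set"
  assumes fin: "finite C"
  shows "(\<forall>i. card {c \<in> repeated_code C. hdist (b # v) c = i} =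
              card {c \<in> repeated_code C. hdist (b' # w) c = i})
     \<longleftrightarrow> (\<forall>i. card {x \<in> C. hdist v x = i} = card {x \<in> C. hdist w x = i})"
    (is "(\<forall>i. ?M v b i = ?M w b' i) \<longleftrightarrow> (\<forall>i. ?N v i = ?N w i)")
proof -
  have shifted: "{x \<in> C. Suc (hdist u x) = i} = (if i = 0 then {} else {x \<in> C. hdist u x = i - 1})"
    for u :: "'a list" and i by auto
  have M: "?M u a i = ?N u i + (card (UNIV :: 'a set) - 1) * (if i = 0 then 0 else ?N u (i - 1))"
    for u a i by (simp add: card_sphere_repeated_code[OF fin] shifted)
  show ?thesis
  proof
    assume eq: "\<forall>i. ?M v b i = ?M w b' i"
    show "\<forall>i. ?N v i = ?N w i"
    proof
      fix i show "?N v i = ?N w i"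
      proof (induction i)
        case 0
        show ?case using eq M[where u=v and a=b and i=0] M[where u=w and a=b' and i=0] by simp
      next
        case (Suc i)
        show ?case using eq M[where u=v and a=b and i="Suc i"] M[where u=w and a=b' and i="Suc i"] Suc.IH by simp
      qed
    qed
  qed (simp add: M)
qed

lemma completely_regular_repeated_code_iff:
  fixes C :: "'a::{finite,ab_group_add} list set"
  assumes fin: "finite C" and ne: "C \<noteq> {}"
  shows "completely_regular (Suc n) (repeated_code C) \<longleftrightarrow> completely_regular n C"
proof
  assume "completely_regular (Suc n) (repeated_code C)"
  then show "completely_regular n C"
    unfolding completely_regular_def
    by (simp add: vecs_Suc dist_code_repeated_code[OF fin ne]
        flip: sphere_counts_repeated_code_eq_iff[OF fin, where b=0 and b'=0])
next
  assume cr: "completely_regular n C"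
  show "completely_regular (Suc n) (repeated_code C)"
    unfolding completely_regular_def vecs_Suc
  proof (intro ballI impI allI)
    fix v' w' :: "'a list" and i
    assume "v' \<in> {b # v |b v. v \<in> vecs n}" "w' \<in> {b # v |b v. v \<in> vecs n}"
    then obtain b v b' w where v': "v' = b # v" "v \<in> vecs n" and w': "w' = b' # w" "w \<in> vecs n"
      by blast
    assume "dist_code v' (repeated_code C) = dist_code w' (repeated_code C)"
    then have "dist_code v C = dist_code w C"
      unfolding v' w' by (simp add: dist_code_repeated_code[OF fin ne])
    then have "\<forall>i. card {x \<in> C. hdist v x = i} = card {x \<in> C. hdist w x = i}"
      using cr v'(2) w'(2) unfolding completely_regular_def by blast
    then show "card {c \<in> repeated_code C. hdist v' c = i} =
        card {c \<in> repeated_code C. hdist w' c = i}"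
      unfolding v' w' using sphere_counts_repeated_code_eq_iff[OF fin, of b v b' w] by simp
  qed
qed

theorem theorem2p3:
  fixes C :: "'a::{finite,field} list set" and n k d \<rho> :: nat
  assumes lin: "linear_code n C"
    and dimk: "card C = card (UNIV :: 'a set) ^ k"
    and k_pos: "k \<ge> 1"
    and distd: "min_distance C = d"
    and rho: "covering_radius n C = \<rho>"
  shows "covering_radius (Suc n) (repeated_code C) = \<rho>
       \<and> min_distance (repeated_code C) = 1
       \<and> (completely_regular (Suc n) (repeated_code C) \<longleftrightarrow> completely_regular n C)"
proof -
  have sub: "C \<subseteq> vecs n" and zero: "replicate n 0 \<in> C"
    using lin by (auto simp: linear_code_def)
  have fin: "finite C" using sub finite_vecs finite_subset by blast
  have ne: "C \<noteq> {}" using zero by auto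
  show ?thesis
    using covering_radius_repeated_code[OF fin ne] min_distance_repeated_code[OF sub fin zero]
      completely_regular_repeated_code_iff[OF fin ne] rho
    by simp
qed

end
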